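(* Let $k>0$, let $Q\subset\mathbb{R}^2$ be a bounded open set with smooth boundary and connected exterior, let $\theta_1,\dots,\theta_N\in\mathbb{S}^1$, and let $u^\infty_{\theta_1},\dots,u^\infty_{\theta_N}\in L^2(\mathbb{S}^1)$ be given data. Let $R:L^2(\mathbb{S}^1)\to L^2(\mathbb{S}^1)$ be a bounded, self-adjoint, positive definite, invertible linear operator. Let $q_0\in L^2(Q)$ be an initial guess and $\{\alpha_i\}_{i\in\mathbb{N}_0}$ a sequence of positive regularization parameters. Define the Full data Levenberg–Marquardt (FLM) iterates by $q^{FLM}_0:=q_0$ and, for $i\in\mathbb{N}_0$, $$q^{FLM}_{i+1}=q^{FLM}_i+\Big(\alpha_i I+\vec{\mathcal{F}}'[q^{FLM}_i]^H R^{-1}\vec{\mathcal{F}}'[q^{FLM}_i]\Big)^{-1}\vec{\mathcal{F}}'[q^{FLM}_i]^H R^{-1}\Big(\vec u^\infty-\vec{\mathcal{F}}q^{FLM}_i\Big),$$ where $\vec u^\infty:=(u^\infty_{\theta_1},\dots,u^\infty_{\theta_N})$, $\vec{\mathcal{F}}q:=(\mathcal{F}_{\theta_1}q,\dots,\mathcal{F}_{\theta_N}q)$, $\vec{\mathcal{F}}'[q]m:=(\mathcal{F}'_{\theta_1}[q]m,\dots,\mathcal{F}'_{\theta_N}[q]m)$, and $R^{-1}$ acts componentwise on $L^2(\mathbb{S}^1)^N$. Define the Kalman filter Levenberg–Marquardt (KFL) iterates as follows: $q^{KFL}_{0,0}:=q_0$; for $i\ge 1$, $q^{KFL}_{i,0}:=q^{KFL}_{i-1,N}$;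 for every $i\in\mathbb{N}_0$, $B_{i,0}:=\frac{1}{\alpha_i}I$, and for $n=1,\dots,N$, $$K_{i,n}:=B_{i,n-1}\mathcal{F}'_{\theta_n}[q^{KFL}_{i,0}]^H\Big(R+\mathcal{F}'_{\theta_n}[q^{KFL}_{i,0}]B_{i,n-1}\mathcal{F}'_{\theta_n}[q^{KFL}_{i,0}]^H\Big)^{-1},$$ $$q^{KFL}_{i,n}:=q^{KFL}_{i,n-1}+K_{i,n}\Big(u^\infty_{\theta_n}-\mathcal{F}_{\theta_n}q^{KFL}_{i,0}+\mathcal{F}'_{\theta_n}[q^{KFL}_{i,0}]q^{KFL}_{i,0}-\mathcal{F}'_{\theta_n}[q^{KFL}_{i,0}]q^{KFL}_{i,n-1}\Big),$$ $$B_{i,n}:=\Big(I-K_{i,n}\mathcal{F}'_{\theta_n}[q^{KFL}_{i,0}]\Big)B_{i,n-1}.$$ Then, for all $i\in\mathbb{N}_0$ (with both iterations well defined, i.e. the relevant iterates lie in the domain where the Fréchet derivatives exist), $q^{KFL}_{i,N}=q^{FLM}_{i+1}$.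
   Context: For an incident direction $\theta\in\mathbb{S}^1$, the plane wave is $u^{inc}(x,\theta)=e^{ikx\cdot\theta}$. For $q\in L^\infty(Q)$ (extended by zero outside $Q$), $u_q(\cdot,\theta)$ denotes the solution of the Lippmann–Schwinger equation $u(x,\theta)=u^{inc}(x,\theta)+k^2\int_Q q(y)u(y,\theta)\Phi(x,y)\,dy$, where $\Phi(x,y)=\frac{i}{4}H^{(1)}_0(k|x-y|)$ is the fundamental solution of the Helmholtz equation in $\mathbb{R}^2$. The far-field mapping is $\mathcal{F}_\theta q(\hat x):=\frac{k^2e^{i\pi/4}}{\sqrt{8\pi k}}\int_Q e^{-ik\hat x\cdot y}u_q(y,\theta)q(y)\,dy$, $\hat x\in\mathbb{S}^1$. On $L^\infty_+(Q):=\{q\in L^\infty(Q):\exists q_0>0,\ \mathrm{Im}\,q\ge q_0\text{ a.e. on }Q\}\subset L^2(Q)$, $\mathcal{F}_\theta$ is Fréchet differentiable as a map into $L^2(\mathbb{S}^1)$, with derivative $\mathcal{F}'_\theta[q]:L^2(Q)\to L^2(\mathbb{S}^1)$ given by $\mathcal{F}'_\theta[q]m=v^\infty_{q,m}$, the far-field pattern of the radiating solution $v$ of $\Delta v+k^2(1+q)v=-k^2 m\,u_q(\cdot,\theta)$ in $\mathbb{R}^2$. The superscript $H$ denotes the Hilbert-space adjoint with respect to the standard $L^2$ inner products of $L^2(Q)$, $L^2(\mathbb{S}^1)$ and $L^2(\mathbb{S}^1)^N$. *)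

theory Defs
  imports "HOL-Analysis.Analysis"
begin

text \<open>Abstract Hilbert-space setting: 'x plays L2(Q), 'y plays L2(S1).
  F n : the far-field map for direction theta_n, DF n q : its Frechet derivative at q,
  u n : data for direction theta_n, R : covariance operator on 'y.\<close>

text \<open>One Full-data Levenberg--Marquardt step. The adjoint of the stacked
  derivative w.r.t. the product inner product of L2(S1)^N is written out
  as the sum of the componentwise adjoints.\<close>
definition FLM_step ::
  "(nat \<Rightarrow> 'x::{real_inner,complete_space} \<Rightarrow> 'y::{real_inner,complete_space})
   \<Rightarrow> (nat \<Rightarrow> 'x \<Rightarrow> 'x \<Rightarrow> 'y) \<Rightarrow> ('y \<Rightarrow> 'y) \<Rightarrow> (nat \<Rightarrow> 'y) \<Rightarrow> nat
   \<Rightarrow> real \<Rightarrow> 'x \<Rightarrow> 'x" where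
  "FLM_step F DF R u N a q =
     q + inv (\<lambda>m. a *\<^sub>R m + (\<Sum>n = 1..N. adjoint (DF n q) (inv R (DF n q m))))
             (\<Sum>n = 1..N. adjoint (DF n q) (inv R (u n - F n q)))"

fun FLM :: "(nat \<Rightarrow> 'x::{real_inner,complete_space} \<Rightarrow> 'y::{real_inner,complete_space})
   \<Rightarrow> (nat \<Rightarrow> 'x \<Rightarrow> 'x \<Rightarrow> 'y) \<Rightarrow> ('y \<Rightarrow> 'y) \<Rightarrow> (nat \<Rightarrow> 'y) \<Rightarrow> nat
   \<Rightarrow> (nat \<Rightarrow> real) \<Rightarrow> 'x \<Rightarrow> nat \<Rightarrow> 'x" where
  "FLM F DF R u N alpha q0 0 = q0"
| "FLM F DF R u N alpha q0 (Suc i) = FLM_step F DF R u N (alpha i) (FLM F DF R u N alpha q0 i)"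

text \<open>Inner Kalman sweep of outer step i: given a = alpha_i and the linearisation
  point qb = q_{i,0}, returns (q_{i,n}, B_{i,n}).\<close>
fun KFL_inner :: "(nat \<Rightarrow> 'x::{real_inner,complete_space} \<Rightarrow> 'y::{real_inner,complete_space})
   \<Rightarrow> (nat \<Rightarrow> 'x \<Rightarrow> 'x \<Rightarrow> 'y) \<Rightarrow> ('y \<Rightarrow> 'y) \<Rightarrow> (nat \<Rightarrow> 'y)
   \<Rightarrow> real \<Rightarrow> 'x \<Rightarrow> nat \<Rightarrow> 'x \<times> ('x \<Rightarrow> 'x)" where
  "KFL_inner F DF R u a qb 0 = (qb, \<lambda>m. (1 / a) *\<^sub>R m)"
| "KFL_inner F DF R u a qb (Suc n) =
     (let (q, B) = KFL_inner F DF R u a qb n;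
          A = DF (Suc n) qb;
          K = (\<lambda>y. B (adjoint A (inv (\<lambda>z. R z + A (B (adjoint A z))) y)))
      in (q + K (u (Suc n) - F (Suc n) qb + A qb - A q),
          \<lambda>m. B m - K (A (B m))))"

fun KFL_start :: "(nat \<Rightarrow> 'x::{real_inner,complete_space} \<Rightarrow> 'y::{real_inner,complete_space})
   \<Rightarrow> (nat \<Rightarrow> 'x \<Rightarrow> 'x \<Rightarrow> 'y) \<Rightarrow> ('y \<Rightarrow> 'y) \<Rightarrow> (nat \<Rightarrow> 'y) \<Rightarrow> nat
   \<Rightarrow> (nat \<Rightarrow> real) \<Rightarrow> 'x \<Rightarrow> nat \<Rightarrow> 'x" where
  "KFL_start F DF R u N alpha q0 0 = q0"
| "KFL_start F DF R u N alpha q0 (Suc i) =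
     fst (KFL_inner F DF R u (alpha i) (KFL_start F DF R u N alpha q0 i) N)"

definition KFL_q :: "(nat \<Rightarrow> 'x::{real_inner,complete_space} \<Rightarrow> 'y::{real_inner,complete_space})
   \<Rightarrow> (nat \<Rightarrow> 'x \<Rightarrow> 'x \<Rightarrow> 'y) \<Rightarrow> ('y \<Rightarrow> 'y) \<Rightarrow> (nat \<Rightarrow> 'y) \<Rightarrow> nat
   \<Rightarrow> (nat \<Rightarrow> real) \<Rightarrow> 'x \<Rightarrow> nat \<Rightarrow> nat \<Rightarrow> 'x" where
  "KFL_q F DF R u N alpha q0 i n =
     fst (KFL_inner F DF R u (alpha i) (KFL_start F DF R u N alpha q0 i) n)"

end

theory Submission
  imports Defs
begin

text \<open>Both iterations solve the same linearised problem at qb = q_{i,0}. With A_k = F'_k[qb],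
  H_n = alpha I + sum_{k<=n} A_k^* R^-1 A_k and g_n = sum_{k<=n} A_k^* R^-1 (u_k - F_k qb), the
  FLM step is qb + H_N^-1 g_N. The Kalman sweep maintains B_n = H_n^-1 and
  H_n (q_{i,n} - qb) = g_n: each update is the Sherman-Morrison-Woodbury formula for adding
  A_n^* R^-1 A_n. Every H_n is self-adjoint and alpha-coercive, hence bijective by Lax-Milgram,
  proved here by minimising the associated quadratic functional; the case H = I is the Riesz
  representation theorem, which provides the Hilbert-space adjoints A_k^*.\<close>

lemma uniformly_convex_minimizing_sequence_Cauchy:
  fixes J :: "'a::real_normed_vector \<Rightarrow> real" and xs :: "nat \<Rightarrow> 'a"
  assumes c: "c > 0"
    and uniformly_convex: "\<And>x y. c * (norm (x - y))\<^sup>2 \<le> 2 * (J x + J y - 2 * J ((1/2) *\<^sub>R (x + y)))"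
    and lower: "\<And>x. d \<le> J x"
    and minimizing: "\<And>k. J (xs k) < d + 1 / real (Suc k)"
  shows "Cauchy xs"
proof (rule CauchyI)
  fix e :: real assume e: "e > 0"
  obtain M :: nat where M: "4 / (c * e\<^sup>2) < real M" using reals_Archimedean2 by blast
  have "norm (xs m - xs n) < e" if "m \<ge> M" "n \<ge> M" for m n
  proof -
    have "c * (norm (xs m - xs n))\<^sup>2 \<le> 2 / real (Suc m) + 2 / real (Suc n)"
      using uniformly_convex[of "xs m" "xs n"] minimizing[of m] minimizing[of n]
        lower[of "(1/2) *\<^sub>R (xs m + xs n)"] by simp
    also have "\<dots> \<le> 2 / real (Suc M) + 2 / real (Suc M)"
      using that by (intro add_mono) (simp_all add: frac_le)
    also have "\<dots> = 4 / real (Suc M)" by simp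
    also have "\<dots> < c * e\<^sup>2"
    proof -
      have ce: "c * e\<^sup>2 > 0" using c e by simp
      then have "4 < real M * (c * e\<^sup>2)" using M by (simp add: divide_less_eq)
      also have "\<dots> < real (Suc M) * (c * e\<^sup>2)" using ce by (simp add: distrib_right)
      finally show ?thesis by (simp add: divide_less_eq mult.commute)
    qed
    finally have "(norm (xs m - xs n))\<^sup>2 < e\<^sup>2" using c by simp
    then show ?thesis using e by (simp add: power_less_imp_less_base)
  qed
  then show "\<exists>M. \<forall>m\<ge>M. \<forall>n\<ge>M. norm (xs m - xs n) < e" by blast
qed

lemma selfadjoint_coercive_quadratic_has_minimizer:
  fixes T :: "'a::{real_inner,complete_space} \<Rightarrow> 'a" and l :: "'a \<Rightarrow> real"
  assumes T: "bounded_linear T" and sym: "\<And>x y. T x \<bullet> y = x \<bullet> T y"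
    and c: "c > 0" and coercive: "\<And>x. c * (norm x)\<^sup>2 \<le> T x \<bullet> x"
    and l: "bounded_linear l"
  shows "\<exists>x. \<forall>y. T x \<bullet> x - 2 * l x \<le> T y \<bullet> y - 2 * l y"
proof -
  interpret T: bounded_linear T by fact
  interpret l: bounded_linear l by fact
  define J where "J x = T x \<bullet> x - 2 * l x" for x
  obtain L where L: "\<And>x. norm (l x) \<le> norm x * L" using l.bounded by blast
  have "- (L\<^sup>2 / c) \<le> J x" for x
  proof -
    have "0 \<le> (c * norm x - L)\<^sup>2 / c" using c by simp
    also have "\<dots> = c * (norm x)\<^sup>2 - 2 * L * norm x + L\<^sup>2 / c"
      using c by (simp add: field_simps power2_eq_square)
    finally show ?thesis
      using coercive[of x] L[of x] unfolding J_def by (simp add: algebra_simps abs_le_iff)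
  qed
  then have bdd: "bdd_below (range J)" by (rule bdd_belowI2)
  define d where "d = Inf (range J)"
  have lower: "d \<le> J x" for x unfolding d_def using bdd by (simp add: cInf_lower)
  have "\<exists>x. J x < d + 1 / real (Suc k)" for k
    using cInf_lessD[of "range J" "d + 1 / real (Suc k)"] unfolding d_def by auto
  then obtain xs where minimizing: "\<And>k. J (xs k) < d + 1 / real (Suc k)" by metis
  have parallelogram: "T (x - y) \<bullet> (x - y) = 2 * (J x + J y - 2 * J ((1/2) *\<^sub>R (x + y)))" for x y
    unfolding J_def by (simp add: T.add T.diff T.scaleR l.add l.scaleR inner_add_left
        inner_add_right inner_diff_left inner_diff_right sym[of y x] inner_commute[of y]
        algebra_simps)
  have "c * (norm (x - y))\<^sup>2 \<le> 2 * (J x + J y - 2 * J ((1/2) *\<^sub>R (x + y)))" for x y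
    using coercive[of "x - y"] unfolding parallelogram .
  from uniformly_convex_minimizing_sequence_Cauchy[OF c this lower minimizing]
  obtain x where x: "xs \<longlonglongrightarrow> x" using Cauchy_convergent_iff convergent_def by blast
  have "(\<lambda>k. J (xs k)) \<longlonglongrightarrow> J x"
    unfolding J_def by (intro tendsto_intros T.tendsto l.tendsto x)
  moreover have "(\<lambda>k. d + 1 / real (Suc k)) \<longlonglongrightarrow> d"
    using tendsto_add[OF tendsto_const LIMSEQ_Suc[OF lim_1_over_n]] by simp
  ultimately have "J x \<le> d"
    using minimizing by (intro LIMSEQ_le) (auto intro: less_imp_le)
  then show ?thesis using lower unfolding J_def by (meson order_trans)
qed

lemma quadratic_minimizer_variational_equation:
  fixes T :: "'a::real_inner \<Rightarrow> 'a" and l :: "'a \<Rightarrow> real"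
  assumes T: "linear T" and l: "linear l" and sym: "\<And>x y. T x \<bullet> y = x \<bullet> T y"
    and nonneg: "\<And>z. 0 \<le> T z \<bullet> z"
    and minimal: "\<And>y. T x \<bullet> x - 2 * l x \<le> T y \<bullet> y - 2 * l y"
  shows "T x \<bullet> z = l z"
proof (rule ccontr)
  interpret T: linear T by fact
  interpret l: linear l by fact
  define g where "g = T x \<bullet> z - l z"
  define h where "h = T z \<bullet> z"
  assume "T x \<bullet> z \<noteq> l z"
  then have "g \<noteq> 0" unfolding g_def by simp
  have "h \<ge> 0" unfolding h_def by (rule nonneg)
  have "T z \<bullet> x = T x \<bullet> z" using sym[of z x] by (simp add: inner_commute)
  then have expand: "T (x + t *\<^sub>R z) \<bullet> (x + t *\<^sub>R z) - 2 * l (x + t *\<^sub>R z)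
      = T x \<bullet> x - 2 * l x + (2 * t * g + t\<^sup>2 * h)" for t
    unfolding g_def h_def
    by (simp add: T.add T.scale l.add l.scale inner_add_left inner_add_right
        algebra_simps power2_eq_square)
  \<comment> \<open>a step of length \<open>t\<close> along \<open>z\<close> would strictly decrease the functional\<close>
  define t where "t = - g / (h + 1)"
  have t: "t * (h + 1) = - g" unfolding t_def using \<open>h \<ge> 0\<close> by simp
  have "(2 * t * g + t\<^sup>2 * h) * (h + 1)\<^sup>2 = 2 * g * (t * (h + 1)) * (h + 1) + h * (t * (h + 1))\<^sup>2"
    by (simp add: algebra_simps power2_eq_square)
  also have "\<dots> = - (g\<^sup>2 * (h + 2))"
    unfolding t by (simp add: algebra_simps power2_eq_square)
  also have "\<dots> < 0" using \<open>g \<noteq> 0\<close> \<open>h \<ge> 0\<close> by simp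
  finally have "2 * t * g + t\<^sup>2 * h < 0" using \<open>h \<ge> 0\<close> by (simp add: mult_less_0_iff)
  with minimal[of "x + t *\<^sub>R z"] show False unfolding expand by simp
qed

lemma lax_milgram_selfadjoint:
  fixes T :: "'a::{real_inner,complete_space} \<Rightarrow> 'a" and l :: "'a \<Rightarrow> real"
  assumes T: "bounded_linear T" and sym: "\<And>x y. T x \<bullet> y = x \<bullet> T y"
    and c: "c > 0" and coercive: "\<And>x. c * (norm x)\<^sup>2 \<le> T x \<bullet> x"
    and l: "bounded_linear l"
  shows "\<exists>x. \<forall>z. T x \<bullet> z = l z"
proof -
  obtain x where "\<forall>y. T x \<bullet> x - 2 * l x \<le> T y \<bullet> y - 2 * l y"
    using selfadjoint_coercive_quadratic_has_minimizer[OF assms] by blast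
  moreover have "0 \<le> T z \<bullet> z" for z
    by (rule order_trans[OF _ coercive]) (simp add: c less_imp_le)
  ultimately show ?thesis
    using quadratic_minimizer_variational_equation T l sym
    by (metis bounded_linear.linear)
qed

lemma riesz_representation:
  fixes l :: "'a::{real_inner,complete_space} \<Rightarrow> real"
  assumes "bounded_linear l"
  shows "\<exists>w. \<forall>z. w \<bullet> z = l z"
  using lax_milgram_selfadjoint[where T = "\<lambda>x. x" and c = 1, OF bounded_linear_ident _ _ _ assms]
  by (simp add: power2_norm_eq_inner)

lemma adjoint_works_complete:
  fixes f :: "'a::{real_inner,complete_space} \<Rightarrow> 'b::real_inner"
  assumes f: "bounded_linear f"
  shows "x \<bullet> adjoint f y = f x \<bullet> y"
proof -
  have "\<exists>w. \<forall>z. w \<bullet> z = f z \<bullet> y" for y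
    by (rule riesz_representation) (rule bounded_linear_compose[OF bounded_linear_inner_left f])
  then obtain w where w: "\<And>y z. w y \<bullet> z = f z \<bullet> y" by metis
  have "adjoint f = w"
    by (rule adjoint_unique) (metis w inner_commute)
  then show ?thesis by (metis w inner_commute)
qed

lemma bounded_linear_adjoint:
  fixes f :: "'a::{real_inner,complete_space} \<Rightarrow> 'b::real_inner"
  assumes f: "bounded_linear f"
  shows "bounded_linear (adjoint f)"
proof -
  interpret f: bounded_linear f by fact
  obtain K where K: "K > 0" "\<And>x. norm (f x) \<le> norm x * K" using f.pos_bounded by blast
  note adj = adjoint_works_complete[OF f]
  show ?thesis
  proof (rule bounded_linear_intro[where K = K])
    show "adjoint f (y + y') = adjoint f y + adjoint f y'" for y y'
      by (rule vector_eq_ldot[THEN iffD1]) (simp add: adj inner_add_right)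
    show "adjoint f (r *\<^sub>R y) = r *\<^sub>R adjoint f y" for r y
      by (rule vector_eq_ldot[THEN iffD1]) (simp add: adj)
  next
    fix y
    have "(norm (adjoint f y))\<^sup>2 = f (adjoint f y) \<bullet> y"
      by (simp flip: adj add: power2_norm_eq_inner)
    also have "\<dots> \<le> norm (adjoint f y) * K * norm y"
      using norm_cauchy_schwarz[of "f (adjoint f y)" y] K(2)[of "adjoint f y"]
      by (meson mult_right_mono norm_ge_zero order_trans)
    finally show "norm (adjoint f y) \<le> norm y * K"
      using K(1) by (cases "adjoint f y = 0") (auto simp: power2_eq_square mult.commute)
  qed
qed

lemma coercive_imp_inj:
  fixes T :: "'a::real_inner \<Rightarrow> 'a"
  assumes T: "linear T" and c: "c > 0" and coercive: "\<And>x. c * (norm x)\<^sup>2 \<le> T x \<bullet> x"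
  shows "inj T"
proof (rule linear_injective_0[OF T, THEN iffD2], intro allI impI)
  fix x assume "T x = 0"
  then have "c * (norm x)\<^sup>2 \<le> 0" using coercive[of x] by simp
  with c show "x = 0" by (simp add: mult_le_0_iff)
qed

lemma selfadjoint_coercive_imp_surj:
  fixes T :: "'a::{real_inner,complete_space} \<Rightarrow> 'a"
  assumes T: "bounded_linear T" and sym: "\<And>x y. T x \<bullet> y = x \<bullet> T y"
    and c: "c > 0" and coercive: "\<And>x. c * (norm x)\<^sup>2 \<le> T x \<bullet> x"
  shows "surj T"
proof -
  have "\<exists>x. T x = y" for y
    using lax_milgram_selfadjoint[OF assms bounded_linear_inner_right[of y]]
    by (metis vector_eq_rdot)
  then show ?thesis by (metis surj_def)
qed

text \<open>Sherman-Morrison-Woodbury for the Kalman gain K = B A^* S^-1, S = R + A B A^*: the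
  invertibility of S is not assumed but inherited from the surjectivity of H + A^* R^-1 A.\<close>

lemma kalman_gain_identity:
  fixes H B :: "'x::real_vector \<Rightarrow> 'x" and A :: "'x \<Rightarrow> 'y::real_vector"
    and At :: "'y \<Rightarrow> 'x" and R Ri :: "'y \<Rightarrow> 'y"
  assumes At: "linear At" and Ri: "linear Ri"
    and Ri_R: "\<And>z. Ri (R z) = z" and R_Ri: "\<And>z. R (Ri z) = z"
    and H_B: "\<And>v. H (B v) = v" and B_H: "\<And>x. B (H x) = x"
    and surj: "surj (\<lambda>m. H m + At (Ri (A m)))"
  shows "H (B (At (inv (\<lambda>z. R z + A (B (At z))) y)))
           + At (Ri (A (B (At (inv (\<lambda>z. R z + A (B (At z))) y))))) = At (Ri y)"
proof -
  interpret At: linear At by fact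
  interpret Ri: linear Ri by fact
  define S where "S = (\<lambda>z. R z + A (B (At z)))"
  have "\<exists>z. w = S z" for w
  proof -
    obtain x where x: "At (Ri w) = H x + At (Ri (A x))" using surj by (rule surjE)
    then have "At (Ri (w - A x)) = H x" by (simp add: Ri.diff At.diff algebra_simps)
    then have "w = S (Ri (w - A x))" unfolding S_def by (simp add: R_Ri B_H)
    then show ?thesis ..
  qed
  then have "S (inv S y) = y" by (simp add: surj_def surj_f_inv_f)
  moreover have "At (Ri (S z)) = At z + At (Ri (A (B (At z))))" for z
    unfolding S_def by (simp add: Ri.add At.add Ri_R)
  ultimately have "At (Ri y) = At (inv S y) + At (Ri (A (B (At (inv S y)))))" by metis
  then show ?thesis unfolding S_def[symmetric] H_B by simp
qed

lemma inv_selfadjoint: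
  fixes R :: "'a::real_inner \<Rightarrow> 'a"
  assumes "bij R" and "\<And>v w. R v \<bullet> w = v \<bullet> R w"
  shows "inv R v \<bullet> w = v \<bullet> inv R w"
  using assms(2)[of "inv R v" "inv R w"] by (simp add: assms(1) bij_is_surj surj_f_inv_f)

lemma inner_inv_nonneg:
  fixes R :: "'a::real_inner \<Rightarrow> 'a"
  assumes "bij R" and "\<And>v. v \<noteq> 0 \<Longrightarrow> R v \<bullet> v > 0"
  shows "0 \<le> inv R w \<bullet> w"
  using assms(2)[of "inv R w"]
  by (cases "inv R w = 0") (auto simp: assms(1) bij_is_surj surj_f_inv_f inner_commute)

locale LM_linearisation =
  fixes F :: "nat \<Rightarrow> 'x::{real_inner,complete_space} \<Rightarrow> 'y::{real_inner,complete_space}"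
    and DF :: "nat \<Rightarrow> 'x \<Rightarrow> 'x \<Rightarrow> 'y" and R :: "'y \<Rightarrow> 'y" and u :: "nat \<Rightarrow> 'y"
    and N :: nat and a :: real and qb :: 'x
  assumes DF_bounded_linear: "\<And>k. k \<in> {1..N} \<Longrightarrow> bounded_linear (DF k qb)"
    and R_selfadjoint: "\<And>v w. R v \<bullet> w = v \<bullet> R w"
    and R_pos: "\<And>v. v \<noteq> 0 \<Longrightarrow> R v \<bullet> v > 0"
    and R_bij: "bij R" and inv_R_bounded_linear: "bounded_linear (inv R)"
    and a_pos: "a > 0"
begin

definition normal_op :: "nat \<Rightarrow> 'x \<Rightarrow> 'x" where
  "normal_op n m = a *\<^sub>R m + (\<Sum>k = 1..n. adjoint (DF k qb) (inv R (DF k qb m)))"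

definition normal_rhs :: "nat \<Rightarrow> 'x" where
  "normal_rhs n = (\<Sum>k = 1..n. adjoint (DF k qb) (inv R (u k - F k qb)))"

lemma FLM_step_eq: "FLM_step F DF R u N a qb = qb + inv (normal_op N) (normal_rhs N)"
  unfolding FLM_step_def normal_op_def[abs_def] normal_rhs_def ..

lemma normal_op_Suc:
  "normal_op (Suc n) m = normal_op n m + adjoint (DF (Suc n) qb) (inv R (DF (Suc n) qb m))"
  by (simp add: normal_op_def algebra_simps)

lemma normal_rhs_Suc:
  "normal_rhs (Suc n) = normal_rhs n + adjoint (DF (Suc n) qb) (inv R (u (Suc n) - F (Suc n) qb))"
  by (simp add: normal_rhs_def)

lemma inv_R_R [simp]: "inv R (R z) = z"
  using R_bij by (simp add: bij_is_inj)

lemma R_inv_R [simp]: "R (inv R z) = z"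
  using R_bij by (simp add: bij_is_surj surj_f_inv_f)

lemma normal_op_bounded_linear: "n \<le> N \<Longrightarrow> bounded_linear (normal_op n)"
  unfolding normal_op_def[abs_def]
  by (intro bounded_linear_add bounded_linear_scaleR_right bounded_linear_ident bounded_linear_sum
      bounded_linear_compose[OF bounded_linear_adjoint] bounded_linear_compose[OF inv_R_bounded_linear]
      DF_bounded_linear) auto

lemma inner_normal_op:
  assumes "n \<le> N"
  shows "normal_op n x \<bullet> z = a * (x \<bullet> z) + (\<Sum>k = 1..n. DF k qb z \<bullet> inv R (DF k qb x))"
proof -
  have "adjoint (DF k qb) (inv R (DF k qb x)) \<bullet> z = DF k qb z \<bullet> inv R (DF k qb x)"
    if "k \<in> {1..n}" for k
    using adjoint_works_complete[OF DF_bounded_linear] that assms by (auto simp: inner_commute)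
  then show ?thesis unfolding normal_op_def by (simp add: inner_add_left inner_sum_left)
qed

lemma normal_op_selfadjoint:
  assumes "n \<le> N"
  shows "normal_op n x \<bullet> z = x \<bullet> normal_op n z"
proof -
  have "DF k qb z \<bullet> inv R (DF k qb x) = DF k qb x \<bullet> inv R (DF k qb z)" for k
    by (metis inv_selfadjoint[OF R_bij R_selfadjoint] inner_commute)
  then have "normal_op n x \<bullet> z = normal_op n z \<bullet> x"
    using inner_normal_op[OF assms, of x z] inner_normal_op[OF assms, of z x] inner_commute[of x z]
    by simp
  then show ?thesis by (simp add: inner_commute)
qed

lemma normal_op_coercive:
  assumes "n \<le> N"
  shows "a * (norm x)\<^sup>2 \<le> normal_op n x \<bullet> x"
proof -
  have "0 \<le> DF k qb x \<bullet> inv R (DF k qb x)" for k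
    by (metis inner_inv_nonneg[OF R_bij R_pos] inner_commute)
  then show ?thesis
    using inner_normal_op[OF assms, of x x] by (simp add: power2_norm_eq_inner sum_nonneg)
qed

lemma normal_op_inj: "n \<le> N \<Longrightarrow> inj (normal_op n)"
  by (rule coercive_imp_inj[OF bounded_linear.linear[OF normal_op_bounded_linear] a_pos
      normal_op_coercive])

lemma normal_op_surj: "n \<le> N \<Longrightarrow> surj (normal_op n)"
  by (rule selfadjoint_coercive_imp_surj[OF normal_op_bounded_linear normal_op_selfadjoint a_pos
      normal_op_coercive])

lemma KFL_inner_invariant:
  assumes "n \<le> N"
  shows "(\<forall>v. normal_op n (snd (KFL_inner F DF R u a qb n) v) = v)
    \<and> normal_op n (fst (KFL_inner F DF R u a qb n) - qb) = normal_rhs n"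
  using assms
proof (induction n)
  case 0
  then show ?case using a_pos by (simp add: normal_op_def normal_rhs_def)
next
  case (Suc n)
  obtain q B where qB: "KFL_inner F DF R u a qb n = (q, B)" by fastforce
  with Suc have H_B: "\<And>v. normal_op n (B v) = v"
    and H_q: "normal_op n (q - qb) = normal_rhs n" by auto
  have B_H: "B (normal_op n x) = x" for x
    using normal_op_inj[of n] Suc.prems H_B by (simp add: injD)
  define A where "A = DF (Suc n) qb"
  have A: "bounded_linear A" unfolding A_def using DF_bounded_linear Suc.prems by simp
  define K where "K = (\<lambda>y. B (adjoint A (inv (\<lambda>z. R z + A (B (adjoint A z))) y)))"
  have step: "KFL_inner F DF R u a qb (Suc n) =
      (q + K (u (Suc n) - F (Suc n) qb + A qb - A q), \<lambda>m. B m - K (A (B m)))"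
    by (simp add: qB Let_def K_def A_def)
  interpret H': bounded_linear "normal_op (Suc n)"
    using normal_op_bounded_linear Suc.prems .
  interpret A: bounded_linear A by fact
  interpret At: bounded_linear "adjoint A" using bounded_linear_adjoint[OF A] .
  interpret Ri: bounded_linear "inv R" by (fact inv_R_bounded_linear)
  have H'_eq: "normal_op (Suc n) m = normal_op n m + adjoint A (inv R (A m))" for m
    unfolding A_def by (rule normal_op_Suc)
  have gain: "normal_op (Suc n) (K y) = adjoint A (inv R y)" for y
    unfolding H'_eq K_def
    by (rule kalman_gain_identity[OF At.linear Ri.linear inv_R_R R_inv_R H_B B_H])
       (use normal_op_surj[OF Suc.prems] in \<open>simp add: H'_eq[symmetric]\<close>)
  have "normal_op (Suc n) (B m - K (A (B m))) = m" for m
  proof -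
    have "normal_op (Suc n) (B m) = m + adjoint A (inv R (A (B m)))"
      by (simp add: H'_eq H_B)
    then show ?thesis by (simp add: H'.diff gain)
  qed
  moreover have "normal_op (Suc n) (q + K (u (Suc n) - F (Suc n) qb + A qb - A q) - qb)
      = normal_rhs (Suc n)"
  proof -
    define r where "r = u (Suc n) - F (Suc n) qb"
    have "q + K (u (Suc n) - F (Suc n) qb + A qb - A q) - qb = (q - qb) + K (r - A (q - qb))"
      by (simp add: r_def A.diff algebra_simps)
    then have "normal_op (Suc n) (q + K (u (Suc n) - F (Suc n) qb + A qb - A q) - qb)
        = normal_op (Suc n) (q - qb) + adjoint A (inv R (r - A (q - qb)))"
      by (simp only: H'.add gain)
    also have "\<dots> = normal_rhs n + adjoint A (inv R r)"
      by (simp add: H'_eq H_q Ri.diff At.diff)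
    also have "\<dots> = normal_rhs (Suc n)"
      by (simp add: normal_rhs_Suc A_def r_def)
    finally show ?thesis .
  qed
  ultimately show ?case unfolding step by simp
qed

lemma KFL_inner_eq_FLM_step: "fst (KFL_inner F DF R u a qb N) = FLM_step F DF R u N a qb"
proof -
  have "normal_op N (fst (KFL_inner F DF R u a qb N) - qb) = normal_rhs N"
    using KFL_inner_invariant by simp
  then have "inv (normal_op N) (normal_rhs N) = fst (KFL_inner F DF R u a qb N) - qb"
    using normal_op_inj by (metis order_refl inv_f_f)
  then show ?thesis unfolding FLM_step_eq by simp
qed

end

theorem theorem3p1:
  fixes F :: "nat \<Rightarrow> 'x::{real_inner,complete_space} \<Rightarrow> 'y::{real_inner,complete_space}"
    and DF :: "nat \<Rightarrow> 'x \<Rightarrow> 'x \<Rightarrow> 'y"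
    and R :: "'y \<Rightarrow> 'y" and u :: "nat \<Rightarrow> 'y" and N :: nat
    and alpha :: "nat \<Rightarrow> real" and q0 :: 'x and D :: "'x set" and i :: nat
  assumes deriv: "\<And>n q. n \<in> {1..N} \<Longrightarrow> q \<in> D \<Longrightarrow> (F n has_derivative DF n q) (at q within D)"
    and R_lin: "bounded_linear R"
    and R_sa: "\<And>v w. R v \<bullet> w = v \<bullet> R w"
    and R_pos: "\<And>v. v \<noteq> 0 \<Longrightarrow> R v \<bullet> v > 0"
    and R_inv: "bij R" "bounded_linear (inv R)"
    and alpha_pos: "\<And>j. alpha j > 0"
    and wd: "\<And>j. j \<le> i \<Longrightarrow> FLM F DF R u N alpha q0 j \<in> D"
            "\<And>j. j \<le> i \<Longrightarrow> KFL_start F DF R u N alpha q0 j \<in> D"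
  shows "KFL_q F DF R u N alpha q0 i N = FLM F DF R u N alpha q0 (Suc i)"
proof -
  have sweep: "KFL_q F DF R u N alpha q0 j N
      = FLM_step F DF R u N (alpha j) (KFL_start F DF R u N alpha q0 j)" if "j \<le> i" for j
  proof -
    interpret LM_linearisation F DF R u N "alpha j" "KFL_start F DF R u N alpha q0 j"
      by (rule LM_linearisation.intro[OF _ R_sa R_pos R_inv alpha_pos])
        (rule has_derivative_bounded_linear[OF deriv[OF _ wd(2)[OF that]]])
    show ?thesis unfolding KFL_q_def by (rule KFL_inner_eq_FLM_step)
  qed
  have "j \<le> i \<Longrightarrow> KFL_start F DF R u N alpha q0 j = FLM F DF R u N alpha q0 j" for j
  proof (induction j)
    case (Suc j)
    then have "KFL_start F DF R u N alpha q0 (Suc j)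
        = FLM_step F DF R u N (alpha j) (KFL_start F DF R u N alpha q0 j)"
      using sweep[of j] by (simp add: KFL_q_def)
    with Suc show ?case by simp
  qed simp
  then show ?thesis using sweep[of i] by simp
qed

end
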